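(* If a spherical curve $P$ has a trigon of type D, then $r(P)\le 4$.
   Context: A spherical curve is a smooth immersion $P:S^1\to S^2$ whose self-intersections are finitely many transverse double points, called crossings. It is oriented and has at least one crossing. Regions are the components of $S^2\setminus P(S^1)$, and edges are the arcs of the curve between consecutive crossings. A trigon is a region bounded by three edges. The Gauss word is the cyclic word of crossings met in one traversal of the curve; each crossing appears twice. Crossings $a,b$ are interlaced if their occurrences alternate $a\dots b\dots a\dots b$ in the cyclic word, i.e., their chords cross in the chord diagram. Let a trigon have crossings $x,y,z$. Each of its three edges gives a block of two consecutive letters in the Gauss word, one block on each of $\{x,y\}$, $\{y,z\}$, $\{z,x\}$, so the word has the form $B_1W_1B_2W_2B_3W_3$ with the $W_i$ free of $x,y,z$. The trigon's type is determined by how many of the three pairs among $x,y,z$ are interlaced: type A if exactly two pairs are interlaced; type B if exactly one; type C if all three (e.g. $xy\,W_1\,zx\,W_2\,yz\,W_3$, as in the trefoil curve); type D if none (e.g. $xy\,W_1\,yz\,W_2\,zx\,W_3$). A crossing is reducible if no crossing is interlaced with it; equivalently, only three distinct regions meet at it. $P$ is reducible if it has a reducible crossing. The inverse-half-twisted splice $I$ at a crossing $p$ takes the curve with cyclic Gauss word $p\,A\,p\,B$ to the curve with Gauss word $\overline{A}\,B$, where $\overline{A}$ is $A$ reversed. Geometrically, $p$ is smoothed in the unique way giving a single closed curve, and the result is re-oriented. The reductivity $r(P)$ is the minimal number of successive applications of $I$ needed to reach a reducible spherical curve; $r(P)=0$ if $P$ is reducible. *)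

theory Defs
  imports Main "HOL-Library.Extended_Nat"
begin

text \<open>Combinatorial model of an oriented spherical curve (up to orientation-preserving
homeomorphism of the sphere).  A curve with n crossings is given by its Gauss word
w (a list of length 2n over crossing labels, each label occurring exactly twice;
position i of the list is the i-th passage through a crossing) together with a
local orientation datum eps on passages: eps i holds iff, at the crossing passed at
position i, the other strand (passage partner w i) crosses the strand of passage i
from its right to its left.  Edge e (e < length w) is the arc from passage e to
passage (e+1) mod length w.  A dart (e, b) is edge e traversed forwards (b = True)
or backwards (b = False), with the adjacent region on its left; face_next is the
face-tracing permutation, whose orbits are the regions.  The data come from a curve
on the sphere iff the number of regions is n + 2 (Euler characteristic 2).\<close>

definition gauss_word :: "nat list \<Rightarrow> bool" where
  "gauss_word w \<longleftrightarrow> w \<noteq> [] \<and> (\<forall>c \<in> set w. count_list w c = 2)"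

definition partner :: "nat list \<Rightarrow> nat \<Rightarrow> nat" where
  "partner w i = (THE j. j < length w \<and> j \<noteq> i \<and> w ! j = w ! i)"

definition arrive :: "nat list \<Rightarrow> nat \<times> bool \<Rightarrow> nat" where
  "arrive w d = (if snd d then Suc (fst d) mod length w else fst d)"

definition face_next :: "nat list \<Rightarrow> (nat \<Rightarrow> bool) \<Rightarrow> nat \<times> bool \<Rightarrow> nat \<times> bool" where
  "face_next w eps d =
     (let p = arrive w d; q = partner w p in
      if snd d = eps p then (q, True) else ((q + length w - 1) mod length w, False))"

definition darts :: "nat list \<Rightarrow> (nat \<times> bool) set" where
  "darts w = {0..<length w} \<times> UNIV"

definition face :: "nat list \<Rightarrow> (nat \<Rightarrow> bool) \<Rightarrow> nat \<times> bool \<Rightarrow> (nat \<times> bool) set" where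
  "face w eps d = {(face_next w eps ^^ k) d | k. True}"

definition faces :: "nat list \<Rightarrow> (nat \<Rightarrow> bool) \<Rightarrow> (nat \<times> bool) set set" where
  "faces w eps = face w eps ` darts w"

definition spherical_curve :: "nat list \<Rightarrow> (nat \<Rightarrow> bool) \<Rightarrow> bool" where
  "spherical_curve w eps \<longleftrightarrow>
     gauss_word w
   \<and> (\<forall>i < length w. eps (partner w i) = (\<not> eps i))
   \<and> card (faces w eps) = length w div 2 + 2"

text \<open>Chords of a and b cross in the chord diagram of the cyclic word.\<close>
definition interlaced :: "nat list \<Rightarrow> nat \<Rightarrow> nat \<Rightarrow> bool" where
  "interlaced w a b \<longleftrightarrow> a \<noteq> b \<and>
     ((\<exists>i1 j1 i2 j2. i1 < j1 \<and> j1 < i2 \<and> i2 < j2 \<and> j2 < length w \<and>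
        w ! i1 = a \<and> w ! j1 = b \<and> w ! i2 = a \<and> w ! j2 = b) \<or>
      (\<exists>i1 j1 i2 j2. i1 < j1 \<and> j1 < i2 \<and> i2 < j2 \<and> j2 < length w \<and>
        w ! i1 = b \<and> w ! j1 = a \<and> w ! i2 = b \<and> w ! j2 = a))"

definition trigon :: "nat list \<Rightarrow> (nat \<Rightarrow> bool) \<Rightarrow> (nat \<times> bool) set \<Rightarrow> bool" where
  "trigon w eps F \<longleftrightarrow> F \<in> faces w eps \<and> card F = 3"

definition corners :: "nat list \<Rightarrow> (nat \<times> bool) set \<Rightarrow> nat set" where
  "corners w F = (\<lambda>d. w ! arrive w d) ` F"

definition trigon_typeD :: "nat list \<Rightarrow> (nat \<Rightarrow> bool) \<Rightarrow> (nat \<times> bool) set \<Rightarrow> bool" where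
  "trigon_typeD w eps F \<longleftrightarrow> trigon w eps F \<and> card (corners w F) = 3 \<and>
     (\<forall>a \<in> corners w F. \<forall>b \<in> corners w F. \<not> interlaced w a b)"

definition reducible_word :: "nat list \<Rightarrow> bool" where
  "reducible_word w \<longleftrightarrow> (\<exists>c \<in> set w. \<forall>d. \<not> interlaced w c d)"

text \<open>Inverse-half-twisted splice: writing w = U p A p V, the cyclic word p A p (V U)
becomes rev A @ V @ U.\<close>
definition splice :: "nat list \<Rightarrow> nat \<Rightarrow> nat list" where
  "splice w p =
     (let ks = filter (\<lambda>k. w ! k = p) [0..<length w]; i = ks ! 0; j = ks ! 1 in
      rev (take (j - i - 1) (drop (Suc i) w)) @ drop (Suc j) w @ take i w)"

fun splice_reach :: "nat list \<Rightarrow> nat \<Rightarrow> nat list \<Rightarrow> bool" where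
  "splice_reach w 0 w' = (w' = w)"
| "splice_reach w (Suc k) w' = (\<exists>p \<in> set w. splice_reach (splice w p) k w')"

definition reductivity :: "nat list \<Rightarrow> enat" where
  "reductivity w =
     (if \<exists>k w'. splice_reach w k w' \<and> reducible_word w'
      then enat (LEAST k. \<exists>w'. splice_reach w k w' \<and> reducible_word w')
      else \<infinity>)"

end

theory Submission
  imports Defs
begin

(* The argument is purely combinatorial on the Gauss word w, whose letters occur twice.
   1. Interlacement and splicing.  Projecting w onto two letters a, b reduces interlacement
      to an alternation test on a four-letter word; from this we derive the splice formula:
      after the inverse-half-twisted splice at p, two letters a, b other than p change
      their interlacement status iff both are interlaced with p.
   2. Splicing strategy.  Call x, y, z a parity triple if every other letter is interlaced
      with z iff it is interlaced with exactly one of x, y.  Using the splice formula we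
      show that a pairwise non-interlaced parity triple yields a reducible word after at
      most four splices (splice a common neighbour, then y, then a neighbour of z, then z).
   3. Geometry of the trigon.  The occurrences of the three corner letters of a trigon are
      the endpoints of its three (pairwise disjoint) edges, so between the two occurrences
      of any other letter the corner letters occur an even number of times.  This parity
      makes the corners of a type D trigon a pairwise non-interlaced parity triple.
   The main theorem combines 3 and 2 with the definition of reductivity; of the hypothesis
   spherical_curve only the double occurrence of the letters is needed. *)

(* Every letter occurs exactly twice.  Unlike gauss_word this allows the empty word,
   which splicing may produce. *)
definition double_occurrence :: "nat list \<Rightarrow> bool" where
  "double_occurrence w \<longleftrightarrow> (\<forall>c \<in> set w. count_list w c = 2)"

lemma split_at_letter:
  assumes "double_occurrence w" "p \<in> set w"
  obtains U A V where "w = U @ p # A @ p # V" "p \<notin> set U" "p \<notin> set A" "p \<notin> set V"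
proof -
  obtain U r where w: "w = U @ p # r" "p \<notin> set U" using split_list_first[OF assms(2)] by blast
  have "count_list w p = 2" using assms unfolding double_occurrence_def by blast
  then have "count_list r p = 1" using w by (simp add: count_list_0_iff)
  then have "p \<in> set r" using count_list_0_iff[of r p] by auto
  then obtain A V where r: "r = A @ p # V" "p \<notin> set A" using split_list_first[of p r] by blast
  have "count_list V p = 0" using \<open>count_list r p = 1\<close> r by (simp add: count_list_0_iff)
  then show thesis using that w r by (simp add: count_list_0_iff)
qed

lemma positions_append:
  "filter (\<lambda>k. (xs @ ys) ! k = p) [0..<length (xs @ ys)] =
   filter (\<lambda>k. xs ! k = p) [0..<length xs] @ map ((+) (length xs)) (filter (\<lambda>k. ys ! k = p) [0..<length ys])"
proof -
  have "[0..<length (xs @ ys)] = [0..<length xs] @ map ((+) (length xs)) [0..<length ys]"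
  proof -
    have "map ((+) m) [0..<n] = [m..<m + n]" for m n :: nat by (induction n) auto
    then show ?thesis by (simp add: upt_add_eq_append[of 0])
  qed
  moreover have "filter (\<lambda>k. (xs @ ys) ! k = p) [0..<length xs] = filter (\<lambda>k. xs ! k = p) [0..<length xs]"
    by (rule filter_cong) (auto simp: nth_append)
  moreover have "filter (\<lambda>k. (xs @ ys) ! k = p) (map ((+) (length xs)) [0..<length ys]) =
      map ((+) (length xs)) (filter (\<lambda>k. ys ! k = p) [0..<length ys])"
    by (simp add: filter_map o_def nth_append)
  ultimately show ?thesis by simp
qed

lemma positions_absent: "p \<notin> set xs \<Longrightarrow> filter (\<lambda>k. xs ! k = p) [0..<length xs] = []"
  by (auto simp: filter_empty_conv)

lemma splice_split:
  assumes "w = U @ p # A @ p # V" "p \<notin> set U" "p \<notin> set A" "p \<notin> set V"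
  shows "splice w p = rev A @ V @ U"
proof -
  have w: "w = U @ ([p] @ (A @ ([p] @ V)))" using assms by simp
  have positions: "filter (\<lambda>k. w ! k = p) [0..<length w] = [length U, length U + 1 + length A]"
    unfolding w positions_append positions_absent[OF assms(2)] positions_absent[OF assms(3)]
      positions_absent[OF assms(4)]
    by simp
  show ?thesis unfolding splice_def Let_def positions using assms(1) by simp
qed

lemma splice_set:
  assumes "double_occurrence w" "p \<in> set w"
  shows "set (splice w p) = set w - {p}"
proof (rule split_at_letter[OF assms])
  fix U A V assume split: "w = U @ p # A @ p # V" "p \<notin> set U" "p \<notin> set A" "p \<notin> set V"
  show ?thesis unfolding splice_split[OF split] using split by auto
qed

lemma double_occurrence_splice:
  assumes "double_occurrence w" "p \<in> set w"
  shows "double_occurrence (splice w p)"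
proof (rule split_at_letter[OF assms])
  fix U A V assume split: "w = U @ p # A @ p # V" "p \<notin> set U" "p \<notin> set A" "p \<notin> set V"
  have "count_list (splice w p) c = count_list w c" if "c \<noteq> p" for c
    unfolding splice_split[OF split] using that split by simp
  then show ?thesis using assms(1) splice_set[OF assms] unfolding double_occurrence_def by auto
qed

lemma interlaced_sym: "interlaced w a b \<longleftrightarrow> interlaced w b a"
  unfolding interlaced_def by blast

lemma interlaced_irrefl [simp]: "\<not> interlaced w a a"
  unfolding interlaced_def by blast

lemma interlaced_mem: "interlaced w a b \<Longrightarrow> a \<in> set w \<and> b \<in> set w"
  unfolding interlaced_def by (auto intro!: nth_mem)

lemma drop_cut:
  assumes "i < j" "j \<le> length w"
  shows "drop i w = w ! i # take (j - Suc i) (drop (Suc i) w) @ drop j w"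
proof -
  have "drop (j - Suc i) (drop (Suc i) w) = drop j w" using assms(1) by simp
  then have "drop (Suc i) w = take (j - Suc i) (drop (Suc i) w) @ drop j w"
    by (metis append_take_drop_id)
  then show ?thesis using assms by (simp add: Cons_nth_drop_Suc)
qed

lemma occurs_in_order:
  "(\<exists>i1 j1 i2 j2. i1 < j1 \<and> j1 < i2 \<and> i2 < j2 \<and> j2 < length w \<and>
      w ! i1 = a \<and> w ! j1 = b \<and> w ! i2 = a \<and> w ! j2 = b) \<longleftrightarrow>
   (\<exists>u1 u2 u3 u4 r. w = u1 @ a # u2 @ b # u3 @ a # u4 @ b # r)"
proof
  assume "\<exists>i1 j1 i2 j2. i1 < j1 \<and> j1 < i2 \<and> i2 < j2 \<and> j2 < length w \<and>
      w ! i1 = a \<and> w ! j1 = b \<and> w ! i2 = a \<and> w ! j2 = b"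
  then obtain i1 j1 i2 j2 where ord: "i1 < j1" "j1 < i2" "i2 < j2" "j2 < length w"
    and letters: "w ! i1 = a" "w ! j1 = b" "w ! i2 = a" "w ! j2 = b" by blast
  have "w = take i1 w @ drop i1 w" by simp
  also have "drop i1 w = a # take (j1 - Suc i1) (drop (Suc i1) w) @ drop j1 w"
    using drop_cut[of i1 j1 w] ord letters by simp
  also have "drop j1 w = b # take (i2 - Suc j1) (drop (Suc j1) w) @ drop i2 w"
    using drop_cut[of j1 i2 w] ord letters by simp
  also have "drop i2 w = a # take (j2 - Suc i2) (drop (Suc i2) w) @ drop j2 w"
    using drop_cut[of i2 j2 w] ord letters by simp
  also have "drop j2 w = b # drop (Suc j2) w"
    using Cons_nth_drop_Suc[OF ord(4)] letters(4) by simp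
  finally show "\<exists>u1 u2 u3 u4 r. w = u1 @ a # u2 @ b # u3 @ a # u4 @ b # r" by blast
next
  assume "\<exists>u1 u2 u3 u4 r. w = u1 @ a # u2 @ b # u3 @ a # u4 @ b # r"
  then obtain u1 u2 u3 u4 r where w: "w = u1 @ a # u2 @ b # u3 @ a # u4 @ b # r" by blast
  show "\<exists>i1 j1 i2 j2. i1 < j1 \<and> j1 < i2 \<and> i2 < j2 \<and> j2 < length w \<and>
      w ! i1 = a \<and> w ! j1 = b \<and> w ! i2 = a \<and> w ! j2 = b"
    by (rule exI[of _ "length u1"], rule exI[of _ "length u1 + 1 + length u2"],
        rule exI[of _ "length u1 + 1 + length u2 + 1 + length u3"],
        rule exI[of _ "length u1 + 1 + length u2 + 1 + length u3 + 1 + length u4"])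
       (simp add: w nth_append)
qed

abbreviation proj :: "nat \<Rightarrow> nat \<Rightarrow> nat list \<Rightarrow> nat list" where
  "proj a b w \<equiv> filter (\<lambda>c. c = a \<or> c = b) w"

lemma proj_swap: "proj b a w = proj a b w"
  by (induction w) auto

lemma pattern_iff_proj:
  assumes "count_list w a = 2" "count_list w b = 2" "a \<noteq> b"
  shows "(\<exists>u1 u2 u3 u4 r. w = u1 @ a # u2 @ b # u3 @ a # u4 @ b # r) \<longleftrightarrow> proj a b w = [a, b, a, b]"
proof
  assume "\<exists>u1 u2 u3 u4 r. w = u1 @ a # u2 @ b # u3 @ a # u4 @ b # r"
  then obtain u1 u2 u3 u4 r where w: "w = u1 @ a # u2 @ b # u3 @ a # u4 @ b # r" by blast
  have "count_list (u1 @ u2 @ u3 @ u4 @ r) c = 0" if "c \<in> {a, b}" for c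
    using assms that unfolding w by auto
  then have "a \<notin> set (u1 @ u2 @ u3 @ u4 @ r)" "b \<notin> set (u1 @ u2 @ u3 @ u4 @ r)"
    by (simp_all only: count_list_0_iff[symmetric]) simp_all
  moreover have "proj a b u = []" if "a \<notin> set u" "b \<notin> set u" for u
    using that by (auto simp: filter_empty_conv)
  ultimately show "proj a b w = [a, b, a, b]" unfolding w by simp
next
  assume proj: "proj a b w = [a, b, a, b]"
  obtain u1 r1 where 1: "w = u1 @ a # r1" "proj a b r1 = [b, a, b]"
    using filter_eq_ConsD[OF proj] by (elim exE conjE) simp
  obtain u2 r2 where 2: "r1 = u2 @ b # r2" "proj a b r2 = [a, b]"
    using filter_eq_ConsD[OF 1(2)] by (elim exE conjE) simp
  obtain u3 r3 where 3: "r2 = u3 @ a # r3" "proj a b r3 = [b]"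
    using filter_eq_ConsD[OF 2(2)] by (elim exE conjE) simp
  obtain u4 r where 4: "r3 = u4 @ b # r"
    using filter_eq_ConsD[OF 3(2)] by (elim exE conjE) simp
  show "\<exists>u1 u2 u3 u4 r. w = u1 @ a # u2 @ b # u3 @ a # u4 @ b # r"
    using 1(1) 2(1) 3(1) 4 by blast
qed

definition alternating :: "nat \<Rightarrow> nat \<Rightarrow> nat list \<Rightarrow> bool" where
  "alternating a b l \<longleftrightarrow> l = [a, b, a, b] \<or> l = [b, a, b, a]"

lemma interlaced_alternating:
  assumes "count_list w a = 2" "count_list w b = 2"
  shows "interlaced w a b \<longleftrightarrow> a \<noteq> b \<and> alternating a b (proj a b w)"
proof (cases "a = b")
  case False
  then show ?thesis
    unfolding interlaced_def occurs_in_order alternating_def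
    using pattern_iff_proj[OF assms False] pattern_iff_proj[OF assms(2,1)] False
    by (simp add: proj_swap)
qed simp

lemma proj_without_letter: "p \<notin> set X \<Longrightarrow> proj p a X = replicate (count_list X a) a"
  by (induction X) auto

lemma alternating_around_letter:
  assumes "u + m + v = (2::nat)" "a \<noteq> p"
  shows "alternating p a (replicate u a @ p # replicate m a @ p # replicate v a) \<longleftrightarrow> m = 1"
proof -
  have "u = 0 \<or> u = 1 \<or> u = 2" "m = 0 \<or> m = 1 \<or> m = 2" "v = 2 - u - m" using assms(1) by linarith+
  then show ?thesis using assms unfolding alternating_def by (auto simp: numeral_2_eq_2)
qed

lemma interlaced_split_letter:
  assumes "double_occurrence w" "w = U @ p # A @ p # V" "p \<notin> set U" "p \<notin> set A" "p \<notin> set V"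
    and "a \<noteq> p"
  shows "interlaced w p a \<longleftrightarrow> count_list A a = 1"
proof (cases "a \<in> set w")
  case False
  then have "count_list A a = 0" using assms(2) by (simp add: count_list_0_iff)
  then show ?thesis using False interlaced_mem by auto
next
  case True
  have "p \<in> set w" using assms(2) by simp
  then have counts: "count_list w p = 2" "count_list w a = 2"
    using assms(1) True unfolding double_occurrence_def by blast+
  have "proj p a w = replicate (count_list U a) a @ p # replicate (count_list A a) a @ p #
      replicate (count_list V a) a"
    using assms(2-5) by (simp add: proj_without_letter)
  moreover have "count_list U a + count_list A a + count_list V a = 2"
    using counts(2) assms(2,6) by simp
  ultimately show ?thesis
    unfolding interlaced_alternating[OF counts] using alternating_around_letter assms(6) by auto
qed

lemma alternating_rotate: "alternating a b (U @ X) \<longleftrightarrow> alternating a b (X @ U)"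
proof (induction U arbitrary: X)
  case (Cons x U)
  have "alternating a b (x # l) \<longleftrightarrow> alternating a b (l @ [x])" for l
    unfolding alternating_def by (cases l rule: rev_cases) auto
  then show ?case using Cons[of "X @ [x]"] by simp
qed simp

lemma alternating_four_letters:
  fixes x1 x2 x3 x4 :: nat
  defines "xs \<equiv> [x1, x2, x3, x4]"
  assumes letters: "{x1, x2, x3, x4} \<subseteq> {a, b}" "a \<noteq> b" "count_list xs a = 2" "count_list xs b = 2"
    and k: "k \<in> {0, 1, 2, 3, 4}"
  shows "alternating a b xs \<longleftrightarrow>
    (alternating a b (rev (take k xs) @ drop k xs) \<noteq>
     (count_list (take k xs) a = 1 \<and> count_list (take k xs) b = 1))"
  using k
proof (elim insertE emptyE)
  show ?thesis if "k = 0" using that letters by (auto simp: xs_def alternating_def)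
  show ?thesis if "k = 1" using that letters by (auto simp: xs_def alternating_def)
  show ?thesis if "k = 2" using that letters by (auto simp: xs_def alternating_def numeral_2_eq_2)
  show ?thesis if "k = 3" using that letters by (auto simp: xs_def alternating_def numeral_3_eq_3)
  show ?thesis if "k = 4" using that letters by (auto simp: xs_def alternating_def)
qed

lemma alternating_reverse_prefix:
  assumes "set l \<subseteq> {a, b}" "set m \<subseteq> {a, b}" "a \<noteq> b"
    and "count_list (l @ m) a = 2" "count_list (l @ m) b = 2"
  shows "alternating a b (l @ m) \<longleftrightarrow>
    (alternating a b (rev l @ m) \<noteq> (count_list l a = 1 \<and> count_list l b = 1))"
proof -
  have "length xs = count_list xs a + count_list xs b" if "set xs \<subseteq> {a, b}" for xs
    using that assms(3) by (induction xs) auto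
  then have len: "length (l @ m) = 4" using assms by simp
  moreover have "\<exists>x1 x2 x3 x4. xs = [x1, x2, x3, x4]" if "length xs = 4" for xs :: "nat list"
    using that by (auto simp add: length_Suc_conv numeral_eq_Suc)
  ultimately obtain x1 x2 x3 x4 where xs: "l @ m = [x1, x2, x3, x4]" by blast
  have lm: "l = take (length l) [x1, x2, x3, x4]" "m = drop (length l) [x1, x2, x3, x4]"
    using xs by (metis append_eq_conv_conj)+
  have "length l \<in> {0, 1, 2, 3, 4}" using len by (simp del: length_0_conv) arith
  moreover have "set (l @ m) \<subseteq> {a, b}" using assms(1,2) by simp
  then have "{x1, x2, x3, x4} \<subseteq> {a, b}" unfolding xs by simp
  ultimately show ?thesis
    using alternating_four_letters[of x1 x2 x3 x4 a b "length l"] assms(3-5) lm xs by (metis (no_types))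
qed

lemma count_list_filter: "count_list (filter P xs) x = (if P x then count_list xs x else 0)"
  by (induction xs) auto

lemma splice_interlaced:
  assumes "double_occurrence w" "p \<in> set w"
  shows "interlaced (splice w p) a b \<longleftrightarrow>
    a \<noteq> b \<and> a \<noteq> p \<and> b \<noteq> p \<and> (interlaced w a b \<noteq> (interlaced w p a \<and> interlaced w p b))"
proof (cases "a \<noteq> b \<and> a \<noteq> p \<and> b \<noteq> p \<and> a \<in> set w \<and> b \<in> set w")
  case False
  then show ?thesis using interlaced_mem splice_set[OF assms] by fastforce
next
  case True
  then have ab: "a \<noteq> b" "a \<noteq> p" "b \<noteq> p" by auto
  obtain U A V where split: "w = U @ p # A @ p # V" "p \<notin> set U" "p \<notin> set A" "p \<notin> set V"
    using split_at_letter[OF assms] by blast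
  have counts: "count_list w a = 2" "count_list w b = 2"
    using True assms(1) unfolding double_occurrence_def by auto
  then have counts': "count_list (splice w p) a = 2" "count_list (splice w p) b = 2"
    unfolding splice_split[OF split] using split ab by auto
  have proj_w: "proj a b w = proj a b U @ proj a b A @ proj a b V" using split(1) ab by simp
  have proj_splice: "proj a b (splice w p) = rev (proj a b A) @ (proj a b V @ proj a b U)"
    unfolding splice_split[OF split] by (simp add: rev_filter)
  have rotate: "alternating a b (proj a b w) \<longleftrightarrow> alternating a b (proj a b A @ (proj a b V @ proj a b U))"
    unfolding proj_w using alternating_rotate[of a b "proj a b U" "proj a b A @ proj a b V"] by simp
  have "count_list (proj a b A @ (proj a b V @ proj a b U)) c = 2" if "c \<in> {a, b}" for c
    using that counts split ab by (auto simp: count_list_filter)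
  then have flip: "alternating a b (proj a b A @ (proj a b V @ proj a b U)) \<longleftrightarrow>
      (alternating a b (rev (proj a b A) @ (proj a b V @ proj a b U)) \<noteq>
       (count_list (proj a b A) a = 1 \<and> count_list (proj a b A) b = 1))"
    by (intro alternating_reverse_prefix) (auto simp: ab)
  have "interlaced w p a \<longleftrightarrow> count_list (proj a b A) a = 1"
    "interlaced w p b \<longleftrightarrow> count_list (proj a b A) b = 1"
    using interlaced_split_letter[OF assms(1) split] ab by (simp_all add: count_list_filter)
  then show ?thesis
    unfolding interlaced_alternating[OF counts] interlaced_alternating[OF counts'] proj_splice rotate flip
    using ab by auto
qed

definition reducible_within :: "nat list \<Rightarrow> nat \<Rightarrow> bool" where
  "reducible_within w n \<longleftrightarrow> (\<exists>k \<le> n. \<exists>w'. splice_reach w k w' \<and> reducible_word w')"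

lemma reducible_within_0:
  assumes "c \<in> set w" "\<And>d. \<not> interlaced w c d"
  shows "reducible_within w n"
proof -
  have "reducible_word w" unfolding reducible_word_def using assms by blast
  then show ?thesis unfolding reducible_within_def by (intro exI[of _ 0]) simp
qed

lemma reducible_within_splice:
  assumes "p \<in> set w" "reducible_within (splice w p) n"
  shows "reducible_within w (Suc n)"
proof -
  obtain k w' where "k \<le> n" "splice_reach (splice w p) k w'" "reducible_word w'"
    using assms(2) unfolding reducible_within_def by blast
  then have "Suc k \<le> Suc n" "splice_reach w (Suc k) w'" using assms(1) by auto
  then show ?thesis unfolding reducible_within_def using \<open>reducible_word w'\<close> by blast
qed

lemma reductivity_le:
  assumes "reducible_within w n"
  shows "reductivity w \<le> enat n"
proof -
  obtain k w' where k: "k \<le> n" "splice_reach w k w'" "reducible_word w'"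
    using assms unfolding reducible_within_def by blast
  then have "(LEAST k. \<exists>w'. splice_reach w k w' \<and> reducible_word w') \<le> k"
    by (intro Least_le) blast
  then show ?thesis unfolding reductivity_def using k by auto
qed

definition twins :: "nat list \<Rightarrow> nat \<Rightarrow> nat \<Rightarrow> bool" where
  "twins w u t \<longleftrightarrow> u \<noteq> t \<and> u \<in> set w \<and> t \<in> set w \<and>
     (\<forall>d. d \<noteq> u \<and> d \<noteq> t \<longrightarrow> (interlaced w u d \<longleftrightarrow> interlaced w t d))"

(* Interlaced twins: splicing at t isolates u. *)
lemma twins_interlaced:
  assumes "double_occurrence w" "twins w u t" "interlaced w u t"
  shows "reducible_within w 1"
proof -
  have t: "t \<in> set w" and u: "u \<in> set (splice w t)"
    using assms(2) splice_set[OF assms(1)] unfolding twins_def by auto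
  have "\<not> interlaced (splice w t) u d" for d
    using assms(2,3) unfolding splice_interlaced[OF assms(1) t] twins_def by (auto simp: interlaced_sym)
  then show ?thesis using reducible_within_splice[OF t reducible_within_0[OF u]] by simp
qed

(* Non-interlaced twins: either t is already isolated, or splicing at a neighbour
   of t interlaces the twins. *)
lemma twins_not_interlaced:
  assumes "double_occurrence w" "twins w u t" "\<not> interlaced w u t"
  shows "reducible_within w 2"
proof (cases "\<exists>s. interlaced w t s")
  case False
  then show ?thesis using assms(2) reducible_within_0 unfolding twins_def by blast
next
  case True
  then obtain s where ts: "interlaced w t s" by blast
  then have s: "s \<in> set w" using interlaced_mem by blast
  have "s \<noteq> u" "s \<noteq> t" using ts assms(3) interlaced_sym by auto
  then have us: "interlaced w u s" using assms(2) ts unfolding twins_def by blast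
  have "twins (splice w s) u t" "interlaced (splice w s) u t"
    using assms(2,3) ts us \<open>s \<noteq> u\<close> \<open>s \<noteq> t\<close> splice_set[OF assms(1) s]
    unfolding twins_def splice_interlaced[OF assms(1) s] by (auto simp: interlaced_sym)
  then have "reducible_within (splice w s) 1"
    using twins_interlaced double_occurrence_splice[OF assms(1) s] by blast
  from reducible_within_splice[OF s this] show ?thesis by (simp add: numeral_2_eq_2)
qed

(* Three distinct letters such that every other letter is interlaced with z iff it is
   interlaced with exactly one of x and y.  The condition is symmetric in x, y, z. *)
definition parity_triple :: "nat list \<Rightarrow> nat \<Rightarrow> nat \<Rightarrow> nat \<Rightarrow> bool" where
  "parity_triple w x y z \<longleftrightarrow> distinct [x, y, z] \<and> {x, y, z} \<subseteq> set w \<and>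
     (\<forall>d. d \<notin> {x, y, z} \<longrightarrow> (interlaced w z d \<longleftrightarrow> (interlaced w x d \<noteq> interlaced w y d)))"

lemma parity_triple_swap: "parity_triple w x y z \<Longrightarrow> parity_triple w x z y"
  unfolding parity_triple_def by auto

(* If u and v are interlaced and t is interlaced with neither, splicing at v makes
   u and t non-interlaced twins. *)
lemma parity_triple_adjacent:
  assumes "double_occurrence w" "parity_triple w u v t" "interlaced w u v"
    and "\<not> interlaced w u t" "\<not> interlaced w v t"
  shows "reducible_within w 3"
proof -
  have v: "v \<in> set w" using assms(2) unfolding parity_triple_def by simp
  have "twins (splice w v) u t" "\<not> interlaced (splice w v) u t"
    using assms(2-5) splice_set[OF assms(1) v]
    unfolding twins_def parity_triple_def splice_interlaced[OF assms(1) v] by (auto simp: interlaced_sym)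
  then have "reducible_within (splice w v) 2"
    using twins_not_interlaced double_occurrence_splice[OF assms(1) v] by blast
  from reducible_within_splice[OF v this] show ?thesis by simp
qed

(* Splicing at a common neighbour p of u and v interlaces u and v and keeps the parity
   triple, with t still interlaced with neither. *)
lemma parity_triple_common_neighbour:
  assumes "double_occurrence w" "parity_triple w u v t"
    and "\<not> interlaced w u v" "\<not> interlaced w u t" "\<not> interlaced w v t"
    and "interlaced w u p" "interlaced w v p"
  shows "reducible_within w 4"
proof -
  have p: "p \<in> set w" using assms(6) interlaced_mem by blast
  have "p \<notin> {u, v, t}" using assms(3-7) interlaced_sym by auto
  then have "\<not> interlaced w t p" using assms(2,6,7) unfolding parity_triple_def by (auto simp: interlaced_sym)
  then have "parity_triple (splice w p) u v t" "interlaced (splice w p) u v"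
    "\<not> interlaced (splice w p) u t" "\<not> interlaced (splice w p) v t"
    using assms(2-7) \<open>p \<notin> {u, v, t}\<close> splice_set[OF assms(1) p]
    unfolding parity_triple_def splice_interlaced[OF assms(1) p] by (auto simp: interlaced_sym)
  then have "reducible_within (splice w p) 3"
    using parity_triple_adjacent double_occurrence_splice[OF assms(1) p] by blast
  from reducible_within_splice[OF p this] show ?thesis by simp
qed

(* A pairwise non-interlaced parity triple gives reducibility within four splices:
   a neighbour of x is a neighbour of exactly one of y, z. *)
lemma parity_triple_reducible_within_4:
  assumes "double_occurrence w" "parity_triple w x y z"
    and "\<not> interlaced w x y" "\<not> interlaced w x z" "\<not> interlaced w y z"
  shows "reducible_within w 4"
proof (cases "\<exists>p. interlaced w x p")
  case False
  then show ?thesis using assms(2) reducible_within_0 unfolding parity_triple_def by auto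
next
  case True
  then obtain p where xp: "interlaced w x p" by blast
  then have "p \<notin> {x, y, z}" using assms(3,4) interlaced_sym by auto
  then consider "interlaced w y p" | "interlaced w z p"
    using assms(2) xp unfolding parity_triple_def by blast
  then show ?thesis
  proof cases
    case 1
    then show ?thesis using parity_triple_common_neighbour[OF assms xp] by blast
  next
    case 2
    have "\<not> interlaced w z y" using assms(5) interlaced_sym by blast
    then show ?thesis
      using parity_triple_common_neighbour[OF assms(1) parity_triple_swap[OF assms(2)] assms(4,3) _ xp 2]
      by blast
  qed
qed

lemma letter_positions:
  assumes "double_occurrence w" "i < length w"
  shows "partner w i < length w" "partner w i \<noteq> i" "w ! partner w i = w ! i"
    and "{k. k < length w \<and> w ! k = w ! i} = {i, partner w i}"
proof -
  define S where "S = {k. k < length w \<and> w ! k = w ! i}"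
  have "card S = count_list w (w ! i)"
    unfolding S_def count_list_eq_length_filter length_filter_conv_card by (rule arg_cong[where f = card]) auto
  also have "\<dots> = 2" using assms unfolding double_occurrence_def by simp
  finally have "card (S - {i}) = 1" using assms(2) unfolding S_def by simp
  then obtain j where j: "S - {i} = {j}" by (rule card_1_singletonE)
  then have "j \<in> S" "j \<noteq> i" "S = {i, j}" using assms(2) unfolding S_def by auto
  moreover have "partner w i = j" unfolding partner_def
  proof (rule the_equality)
    fix j' assume "j' < length w \<and> j' \<noteq> i \<and> w ! j' = w ! i"
    then show "j' = j" using j unfolding S_def by blast
  qed (use \<open>j \<in> S\<close> \<open>j \<noteq> i\<close> in \<open>simp add: S_def\<close>)
  ultimately show "partner w i < length w" "partner w i \<noteq> i" "w ! partner w i = w ! i"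
    "{k. k < length w \<and> w ! k = w ! i} = {i, partner w i}" unfolding S_def by auto
qed

definition depart :: "nat list \<Rightarrow> nat \<times> bool \<Rightarrow> nat" where
  "depart w d = (if snd d then fst d else Suc (fst d) mod length w)"

definition edge_ends :: "nat \<Rightarrow> nat \<Rightarrow> nat set" where
  "edge_ends L e = {e, Suc e mod L}"

lemma arrive_depart: "{arrive w d, depart w d} = edge_ends (length w) (fst d)"
  unfolding arrive_def depart_def edge_ends_def by auto

lemma arrive_less: "fst d < length w \<Longrightarrow> arrive w d < length w"
  unfolding arrive_def by (auto intro: mod_less_divisor)

lemma depart_face_next:
  assumes "double_occurrence w" "fst d < length w"
  shows "fst (face_next w eps d) < length w" "depart w (face_next w eps d) = partner w (arrive w d)"
proof -
  define q where "q = partner w (arrive w d)"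
  have q: "q < length w" unfolding q_def using letter_positions(1)[OF assms(1) arrive_less[OF assms(2)]] .
  have "Suc ((q + length w - 1) mod length w) mod length w = Suc (q + length w - 1) mod length w"
    by (simp add: mod_Suc_eq)
  also have "Suc (q + length w - 1) = q + length w" using q by simp
  also have "(q + length w) mod length w = q" using q by simp
  finally show "depart w (face_next w eps d) = q" "fst (face_next w eps d) < length w"
    using q unfolding face_next_def depart_def Let_def q_def[symmetric] by (auto intro: mod_less_divisor)
qed

lemma face_card_3:
  assumes "card (face w eps d0) = 3"
  defines "f \<equiv> face_next w eps"
  shows "face w eps d0 = {d0, f d0, f (f d0)}" "f (f (f d0)) \<in> face w eps d0"
proof -
  let ?F = "face w eps d0"
  have orbit: "(f ^^ k) d0 \<in> ?F" for k unfolding face_def f_def by blast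
  from orbit[of 0] orbit[of 1] orbit[of 2] orbit[of 3]
  have sub: "{d0, f d0, f (f d0)} \<subseteq> ?F" and "f (f (f d0)) \<in> ?F"
    by (simp_all add: numeral_eq_Suc)
  then show "f (f (f d0)) \<in> ?F" by blast
  have "f (f d0) \<notin> {d0, f d0}"
  proof
    assume closes: "f (f d0) \<in> {d0, f d0}"
    have "(f ^^ k) d0 \<in> {d0, f d0}" for k
      by (induction k) (use closes in auto)
    then have "?F \<subseteq> {d0, f d0}" unfolding face_def f_def by blast
    then have "card ?F \<le> card {d0, f d0}" by (intro card_mono) auto
    moreover have "card {d0, f d0} \<le> 2" by (simp add: card_insert_if)
    ultimately show False using assms(1) by simp
  qed
  moreover have "f d0 \<noteq> d0" using calculation by auto
  ultimately have "card {d0, f d0, f (f d0)} = 3" by auto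
  moreover have "finite ?F" using assms(1) by (metis card.infinite zero_neq_numeral)
  ultimately show "?F = {d0, f d0, f (f d0)}" using sub assms(1) by (metis card_subset_eq)
qed

definition covered_by_edges :: "nat list \<Rightarrow> nat set \<Rightarrow> bool" where
  "covered_by_edges w C \<longleftrightarrow> (\<exists>E \<subseteq> {..<length w}.
     (\<forall>e \<in> E. \<forall>e' \<in> E. e \<noteq> e' \<longrightarrow> edge_ends (length w) e \<inter> edge_ends (length w) e' = {}) \<and>
     {k. k < length w \<and> w ! k \<in> C} = (\<Union>e \<in> E. edge_ends (length w) e))"

lemma trigon_cycle:
  assumes "double_occurrence w" "trigon w eps F" "card (corners w F) = 3"
  obtains d0 d1 d2 where "F = {d0, d1, d2}" "fst d0 < length w" "fst d1 < length w" "fst d2 < length w"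
    and "face_next w eps d0 = d1" "face_next w eps d1 = d2" "face_next w eps d2 = d0"
proof -
  let ?L = "length w" and ?f = "face_next w eps"
  obtain d0 where d0: "d0 \<in> darts w" "F = face w eps d0"
    using assms(2) unfolding trigon_def faces_def by blast
  define d1 d2 where "d1 = ?f d0" and "d2 = ?f d1"
  have F: "F = {d0, d1, d2}" "?f d2 \<in> F"
    using face_card_3[of w eps d0] assms(2) d0(2) unfolding trigon_def d1_def d2_def by auto
  have "fst d0 < ?L" using d0(1) unfolding darts_def by auto
  then have edges: "fst d0 < ?L" "fst d1 < ?L" "fst d2 < ?L"
    using depart_face_next(1)[OF assms(1)] unfolding d1_def d2_def by blast+
  have "card {w ! arrive w d0, w ! arrive w d1, w ! arrive w d2} = 3"
    using assms(3) unfolding corners_def F by simp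
  then have letters: "w ! arrive w d0 \<noteq> w ! arrive w d2" "w ! arrive w d1 \<noteq> w ! arrive w d2"
    by (auto simp: card_insert_if split: if_splits)
  have "depart w d1 = partner w (arrive w d0)" "depart w d2 = partner w (arrive w d1)"
    "depart w (?f d2) = partner w (arrive w d2)"
    using depart_face_next(2)[OF assms(1)] edges unfolding d1_def d2_def by auto
  then have "?f d2 \<noteq> d1" "?f d2 \<noteq> d2"
    using letters letter_positions(3)[OF assms(1)] arrive_less edges by metis+
  then have "?f d2 = d0" using F by blast
  then show thesis using that[OF F(1) edges] unfolding d1_def d2_def by simp
qed

(* The corners of a trigon with three distinct corner letters are covered by the
   three edges of the trigon: each edge runs from one corner to the next. *)
lemma trigon_corners_covered:
  assumes "double_occurrence w" "trigon w eps F" "card (corners w F) = 3"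
  shows "covered_by_edges w (corners w F)" "corners w F \<subseteq> set w"
proof -
  let ?L = "length w"
  obtain d0 d1 d2 where F: "F = {d0, d1, d2}" and edges: "fst d0 < ?L" "fst d1 < ?L" "fst d2 < ?L"
    and cycle: "face_next w eps d0 = d1" "face_next w eps d1 = d2" "face_next w eps d2 = d0"
    using trigon_cycle[OF assms] by blast
  define a0 a1 a2 where "a0 = arrive w d0" and "a1 = arrive w d1" and "a2 = arrive w d2"
  have a: "a0 < ?L" "a1 < ?L" "a2 < ?L" using arrive_less edges unfolding a0_def a1_def a2_def by auto
  note pos0 = letter_positions[OF assms(1) a(1)] and pos1 = letter_positions[OF assms(1) a(2)]
    and pos2 = letter_positions[OF assms(1) a(3)]
  have corners: "corners w F = {w ! a0, w ! a1, w ! a2}"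
    unfolding corners_def F a0_def a1_def a2_def by auto
  then have letters: "w ! a0 \<noteq> w ! a1" "w ! a0 \<noteq> w ! a2" "w ! a1 \<noteq> w ! a2"
    using assms(3) by (auto simp: card_insert_if split: if_splits)
  have "depart w d0 = partner w a2" "depart w d1 = partner w a0" "depart w d2 = partner w a1"
    using depart_face_next(2)[OF assms(1)] edges cycle unfolding a0_def a1_def a2_def by metis+
  then have Q: "edge_ends ?L (fst d0) = {a0, partner w a2}" "edge_ends ?L (fst d1) = {a1, partner w a0}"
    "edge_ends ?L (fst d2) = {a2, partner w a1}"
    using arrive_depart unfolding a0_def a1_def a2_def by metis+
  show "corners w F \<subseteq> set w" unfolding corners using a by auto
  show "covered_by_edges w (corners w F)" unfolding covered_by_edges_def
  proof (intro exI[of _ "{fst d0, fst d1, fst d2}"] conjI)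
    show "\<forall>e \<in> {fst d0, fst d1, fst d2}. \<forall>e' \<in> {fst d0, fst d1, fst d2}. e \<noteq> e' \<longrightarrow>
        edge_ends ?L e \<inter> edge_ends ?L e' = {}"
      using Q letters pos0(2,3) pos1(2,3) pos2(2,3) by auto
    have "{k. k < ?L \<and> w ! k \<in> corners w F} = {a0, partner w a0} \<union> {a1, partner w a1} \<union> {a2, partner w a2}"
      unfolding corners pos0(4)[symmetric] pos1(4)[symmetric] pos2(4)[symmetric] by auto
    then show "{k. k < ?L \<and> w ! k \<in> corners w F} = (\<Union>e \<in> {fst d0, fst d1, fst d2}. edge_ends ?L e)"
      using Q by auto
  qed (use edges in auto)
qed

lemma edge_ends_between_even:
  assumes "e < L" "i < j" "j < L" "i \<notin> edge_ends L e" "j \<notin> edge_ends L e"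
  shows "even (card ({k. i < k \<and> k < j} \<inter> edge_ends L e))"
proof (cases "Suc e < L")
  case True
  then have "{k. i < k \<and> k < j} \<inter> edge_ends L e = (if i < e \<and> e < j then {e, Suc e} else {})"
    using assms unfolding edge_ends_def by auto
  then show ?thesis by simp
next
  case False
  then have "Suc e = L" using assms(1) by simp
  then have "{k. i < k \<and> k < j} \<inter> edge_ends L e = {}"
    using assms unfolding edge_ends_def by auto
  then show ?thesis by simp
qed

lemma length_filter_between:
  assumes "w = U @ d # A @ d # V"
  shows "length (filter P A) = card {k. length U < k \<and> k < length U + 1 + length A \<and> P (w ! k)}"
proof -
  let ?shift = "\<lambda>k. k + Suc (length U)"
  have nth: "w ! ?shift k = A ! k" if "k < length A" for k
    using that assms by (simp add: nth_append)
  have "{k. length U < k \<and> k < length U + 1 + length A \<and> P (w ! k)} = ?shift ` {k. k < length A \<and> P (A ! k)}"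
  proof (intro equalityI subsetI)
    fix k assume "k \<in> {k. length U < k \<and> k < length U + 1 + length A \<and> P (w ! k)}"
    then show "k \<in> ?shift ` {k. k < length A \<and> P (A ! k)}"
      using nth[of "k - Suc (length U)"] by (intro image_eqI[of _ _ "k - Suc (length U)"]) auto
  qed (use nth in auto)
  moreover have "inj_on ?shift {k. k < length A \<and> P (A ! k)}" by (simp add: inj_on_def)
  ultimately show ?thesis by (simp add: card_image length_filter_conv_card)
qed

(* If the occurrences of a set C of letters are the endpoints of pairwise disjoint edges,
   then between the two occurrences of any other letter the letters of C occur an even
   number of times: every such edge lies either entirely inside or entirely outside. *)
lemma covered_even_between:
  assumes "covered_by_edges w C" "w = U @ d # A @ d # V" "d \<notin> C"
  shows "even (length (filter (\<lambda>c. c \<in> C) A))"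
proof -
  let ?L = "length w"
  obtain E where E: "E \<subseteq> {..<?L}"
    "\<forall>e \<in> E. \<forall>e' \<in> E. e \<noteq> e' \<longrightarrow> edge_ends ?L e \<inter> edge_ends ?L e' = {}"
    and P: "{k. k < ?L \<and> w ! k \<in> C} = (\<Union>e \<in> E. edge_ends ?L e)"
    using assms(1) unfolding covered_by_edges_def by blast
  define i j where "i = length U" and "j = length U + 1 + length A"
  let ?S = "{k. i < k \<and> k < j}"
  have w: "w = (U @ d # A) @ d # V" "length (U @ d # A) = j" using assms(2) by (simp_all add: j_def)
  have ij: "i < j" "j < ?L" unfolding i_def j_def assms(2) by simp_all
  have "w ! i = d" unfolding i_def assms(2) by (rule nth_append_length)
  moreover have "w ! j = d" unfolding w(2)[symmetric] by (subst w(1)) (rule nth_append_length)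
  ultimately have "i \<notin> (\<Union>e \<in> E. edge_ends ?L e)" "j \<notin> (\<Union>e \<in> E. edge_ends ?L e)"
    using assms(3) unfolding P[symmetric] by auto
  then have out: "i \<notin> edge_ends ?L e" "j \<notin> edge_ends ?L e" if "e \<in> E" for e
    using that by auto
  have between: "{k. length U < k \<and> k < length U + 1 + length A \<and> w ! k \<in> C} =
      ?S \<inter> {k. k < ?L \<and> w ! k \<in> C}"
    using ij(2) unfolding i_def j_def by auto
  have "length (filter (\<lambda>c. c \<in> C) A) = card (?S \<inter> {k. k < ?L \<and> w ! k \<in> C})"
    unfolding length_filter_between[OF assms(2)] between ..
  also have "\<dots> = card (\<Union>e \<in> E. ?S \<inter> edge_ends ?L e)" by (simp only: P Int_UN_distrib)
  also have "\<dots> = (\<Sum>e \<in> E. card (?S \<inter> edge_ends ?L e))"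
    using E by (intro card_UN_disjoint) (auto intro: finite_subset simp: edge_ends_def)
  finally show ?thesis
    using edge_ends_between_even[OF _ ij(1,2) out] E(1) by (auto intro!: dvd_sum)
qed

(* Three letters whose occurrences are covered by disjoint edges form a parity triple:
   for another letter d, the number of x, y, z interlaced with d has the parity of the
   number of their occurrences between the two occurrences of d, which is even. *)
lemma covered_parity_triple:
  assumes "double_occurrence w" "covered_by_edges w {x, y, z}" "distinct [x, y, z]" "{x, y, z} \<subseteq> set w"
  shows "parity_triple w x y z"
proof -
  have "interlaced w z d \<longleftrightarrow> (interlaced w x d \<noteq> interlaced w y d)" if d: "d \<notin> {x, y, z}" for d
  proof (cases "d \<in> set w")
    case False
    then show ?thesis using interlaced_mem by blast
  next
    case True
    obtain U A V where split: "w = U @ d # A @ d # V" "d \<notin> set U" "d \<notin> set A" "d \<notin> set V"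
      using split_at_letter[OF assms(1) True] by blast
    have crossing: "interlaced w c d \<longleftrightarrow> count_list A c = 1" and bound: "count_list A c \<le> 2"
      if "c \<in> {x, y, z}" for c
    proof -
      show "interlaced w c d \<longleftrightarrow> count_list A c = 1"
        using interlaced_split_letter[OF assms(1) split, of c] that d by (auto simp: interlaced_sym)
      have "count_list w c = 2" using that assms(1,4) unfolding double_occurrence_def by auto
      then show "count_list A c \<le> 2" using split(1) by (auto split: if_splits)
    qed
    have "length (filter (\<lambda>c. c \<in> {x, y, z}) A) = count_list A x + count_list A y + count_list A z"
      using assms(3) by (induction A) auto
    then have "even (count_list A x + count_list A y + count_list A z)"
      using covered_even_between[OF assms(2) split(1) d] by simp
    with bound[of x, simplified] bound[of y, simplified] bound[of z, simplified] show ?thesis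
      unfolding crossing[of x, simplified] crossing[of y, simplified] crossing[of z, simplified]
      by presburger
  qed
  then show ?thesis unfolding parity_triple_def using assms(3,4) by auto
qed

lemma typeD_parity_triple:
  assumes "double_occurrence w" "trigon_typeD w eps F"
  obtains x y z where "parity_triple w x y z"
    and "\<not> interlaced w x y" "\<not> interlaced w x z" "\<not> interlaced w y z"
proof -
  have F: "trigon w eps F" "card (corners w F) = 3"
    and unlinked: "\<forall>a \<in> corners w F. \<forall>b \<in> corners w F. \<not> interlaced w a b"
    using assms(2) unfolding trigon_typeD_def by auto
  obtain x y z where xyz: "corners w F = {x, y, z}" "distinct [x, y, z]"
    using F(2) by (auto simp: card_3_iff)
  have "parity_triple w x y z"
    using covered_parity_triple[OF assms(1) _ xyz(2)] trigon_corners_covered[OF assms(1) F]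
    unfolding xyz(1) by blast
  then show thesis using that unlinked xyz(1) by simp
qed

theorem mainTheorem7:
  fixes w :: "nat list" and eps :: "nat \<Rightarrow> bool"
  assumes "spherical_curve w eps"
    and "\<exists>F. trigon_typeD w eps F"
  shows "reductivity w \<le> 4"
proof -
  have word: "double_occurrence w"
    using assms(1) unfolding spherical_curve_def gauss_word_def double_occurrence_def by blast
  obtain F where "trigon_typeD w eps F" using assms(2) by blast
  then obtain x y z where "parity_triple w x y z"
    and "\<not> interlaced w x y" "\<not> interlaced w x z" "\<not> interlaced w y z"
    using typeD_parity_triple[OF word] by blast
  then have "reducible_within w 4" using parity_triple_reducible_within_4[OF word] by blast
  then show ?thesis using reductivity_le by (metis numeral_eq_enat)
qed

end
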